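(* Let $a\in\mathbb{R}$ with $a>5$ and $n\in\mathbb{N}$. Let $E_n(a,1)$ be the $(n+1)\times n$ matrix whose $(i,j)$ entry is $-a$ if $i=j$, $1$ if $j=i+1$, $a$ if $i=j+1$, $-1$ if $i=j+2$, and $0$ otherwise. Then for every $1\le k\le n+1$, the $n\times n$ matrix $E_n^k(a,1)$ obtained by deleting the $k$-th row of $E_n(a,1)$ is invertible; that is, all order-$n$ minors of $E_n(a,1)$ are nonzero. *)

theory Defs
  imports "Jordan_Normal_Form.Matrix"
begin

definition E_entry :: "real \<Rightarrow> nat \<Rightarrow> nat \<Rightarrow> real" where
  "E_entry a i j =
     (if i = j then - a
      else if j = i + 1 then 1
      else if i = j + 1 then a
      else if i = j + 2 then - 1
      else 0)"

(* The (n+1) x n matrix E_n(a,1); Jordan_Normal_Form matrices are 0-indexed,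
   so the paper's entry (i,j) sits at position (i-1,j-1). *)
definition E_mat :: "nat \<Rightarrow> real \<Rightarrow> real mat" where
  "E_mat n a = mat (n + 1) n (\<lambda>(i, j). E_entry a (i + 1) (j + 1))"

(* Delete the k-th row (1-based) of a matrix. *)
definition delete_row :: "nat \<Rightarrow> 'a mat \<Rightarrow> 'a mat" where
  "delete_row k A = mat (dim_row A - 1) (dim_col A)
     (\<lambda>(i, j). if i + 1 < k then A $$ (i, j) else A $$ (i + 1, j))"

end

theory Submission
  imports Defs "Jordan_Normal_Form.Determinant"
begin

(* Pad a kernel vector x of a deleted matrix E^k with two zeros on the left and zeros on the right,
   giving a sequence y with y(m) = x(m-1). Each surviving row r+1 of E then says
   y(r+3) - y(r) = a (y(r+2) - y(r+1)), and only the deleted row is missing from this list of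
   recurrences. For a >= 9/2 the recurrence forces |y| to at least double at each step where it
   holds, so |y| doubles from the two leading zeros up to the defect, and, the recurrence being
   invariant under reversing the sequence, also from the trailing zeros back down to the defect.
   At the defect the two estimates collide, and y = 0. *)

definition E_recurrence :: "real \<Rightarrow> (nat \<Rightarrow> real) \<Rightarrow> nat \<Rightarrow> bool" where
  "E_recurrence a y r \<longleftrightarrow> - y r + a * y (r + 1) - a * y (r + 2) + y (r + 3) = 0"

lemma abs_doubling_step:
  fixes a u v w z :: real
  assumes a: "9/2 \<le> a" and uv: "2 * \<bar>u\<bar> \<le> \<bar>v\<bar>" and vw: "2 * \<bar>v\<bar> \<le> \<bar>w\<bar>"
    and rec: "- u + a * v - a * w + z = 0"
  shows "2 * \<bar>w\<bar> \<le> \<bar>z\<bar>"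
proof -
  have "\<bar>a * w\<bar> \<le> \<bar>z\<bar> + \<bar>a * v\<bar> + \<bar>u\<bar>"
    using rec by linarith
  then have "a * \<bar>w\<bar> \<le> \<bar>z\<bar> + a * \<bar>v\<bar> + \<bar>u\<bar>"
    using a by (simp add: abs_mult)
  moreover have "2 * (a * \<bar>v\<bar>) \<le> a * \<bar>w\<bar>"
    using mult_left_mono[OF vw, of a] a by simp
  moreover have "9/2 * \<bar>w\<bar> \<le> a * \<bar>w\<bar>"
    using a by (intro mult_right_mono) auto
  ultimately show ?thesis
    \<comment> \<open>|z| \<ge> a|w| - a|v| - |u| \<ge> (a/2 - 1/4)|w|, and a/2 - 1/4 \<ge> 2 exactly when a \<ge> 9/2\<close>
    using uv vw by linarith
qed

lemma E_recurrence_doubling: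
  fixes y :: "nat \<Rightarrow> real"
  assumes a: "9/2 \<le> a" and y0: "y 0 = 0" and y1: "y 1 = 0"
    and rec: "\<And>r. r < N \<Longrightarrow> E_recurrence a y r" and m: "m \<le> N + 1"
  shows "2 * \<bar>y m\<bar> \<le> \<bar>y (m + 1)\<bar>"
proof -
  have pair: "2 * \<bar>y m\<bar> \<le> \<bar>y (m + 1)\<bar> \<and> 2 * \<bar>y (m + 1)\<bar> \<le> \<bar>y (m + 2)\<bar>" if "m \<le> N" for m
    using that
  proof (induction m)
    case 0
    then show ?case using y0 y1 by simp
  next
    case (Suc m)
    then have "2 * \<bar>y m\<bar> \<le> \<bar>y (m + 1)\<bar>" "2 * \<bar>y (m + 1)\<bar> \<le> \<bar>y (m + 2)\<bar>"
      by simp_all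
    moreover have "E_recurrence a y m"
      using rec Suc.prems by simp
    ultimately have "2 * \<bar>y (m + 2)\<bar> \<le> \<bar>y (m + 3)\<bar>"
      using abs_doubling_step[OF a, of "y m" "y (m + 1)" "y (m + 2)" "y (m + 3)"]
      by (simp add: E_recurrence_def)
    then show ?case
      using \<open>2 * \<bar>y (m + 1)\<bar> \<le> \<bar>y (m + 2)\<bar>\<close> by (simp add: numeral_3_eq_3)
  qed
  show ?thesis
  proof (cases "m \<le> N")
    case True
    then show ?thesis using pair by simp
  next
    case False
    then have "m = N + 1" using m by simp
    then show ?thesis using pair[of N] by simp
  qed
qed

lemma E_recurrence_reverse:
  assumes "r \<le> n"
  shows "E_recurrence a (\<lambda>m. y (n + 3 - m)) r \<longleftrightarrow> E_recurrence a y (n - r)"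
proof -
  have "n + 3 - r = n - r + 3" "n + 3 - (r + 1) = n - r + 2"
    "n + 3 - (r + 2) = n - r + 1" "n + 3 - (r + 3) = n - r"
    using assms by auto
  then show ?thesis
    unfolding E_recurrence_def by (simp only:) linarith
qed

lemma doubling_vanishes_below:
  fixes y :: "nat \<Rightarrow> real"
  assumes doubling: "\<And>m. m < j \<Longrightarrow> 2 * \<bar>y m\<bar> \<le> \<bar>y (m + 1)\<bar>" and "y j = 0" and "i \<le> j"
  shows "y i = 0"
  using \<open>i \<le> j\<close>
proof (induction rule: inc_induct)
  case base
  show ?case using \<open>y j = 0\<close> .
next
  case (step m)
  then show ?case using doubling[of m] by simp
qed

lemma E_recurrence_one_defect_vanishes:
  fixes y :: "nat \<Rightarrow> real"
  assumes a: "9/2 \<le> a" and K: "K \<le> n" and y0: "y 0 = 0" and y1: "y 1 = 0"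
    and tail: "\<And>m. n + 2 \<le> m \<Longrightarrow> y m = 0"
    and rec: "\<And>r. r \<le> n \<Longrightarrow> r \<noteq> K \<Longrightarrow> E_recurrence a y r"
  shows "y m = 0"
proof -
  define z where "z m = y (n + 3 - m)" for m
  have z0: "z 0 = 0" and z1: "z 1 = 0"
    using tail by (simp_all add: z_def)
  have rec_z: "E_recurrence a z r" if "r < n - K" for r
    using rec[of "n - r"] E_recurrence_reverse[of r n a y] that unfolding z_def by auto
  have up_y: "2 * \<bar>y m\<bar> \<le> \<bar>y (m + 1)\<bar>" if "m \<le> K + 1" for m
    using E_recurrence_doubling[OF a y0 y1, of K m] rec K that by auto
  have up_z: "2 * \<bar>z m\<bar> \<le> \<bar>z (m + 1)\<bar>" if "m \<le> n - K + 1" for m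
    using E_recurrence_doubling[OF a z0 z1 rec_z that] .
  have "2 * \<bar>y (K + 1)\<bar> \<le> \<bar>y (K + 2)\<bar>" "2 * \<bar>y (K + 2)\<bar> \<le> \<bar>y (K + 1)\<bar>"
    using up_y[of "K + 1"] up_z[of "n - K + 1"] K by (simp_all add: z_def)
  then have defect: "y (K + 1) = 0" "y (K + 2) = 0"
    by simp_all
  show ?thesis
  proof (cases "m \<le> K + 2")
    case True
    then show ?thesis
      using doubling_vanishes_below[of "K + 2" y m] up_y defect by simp
  next
    case False
    have "z (n - K + 2) = 0"
      using defect K by (simp add: z_def)
    then have "z (n + 3 - m) = 0"
      using doubling_vanishes_below[of "n - K + 2" z "n + 3 - m"] up_z False by simp
    then show ?thesis
      using tail[of m] False by (cases "m \<le> n + 3") (simp_all add: z_def)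
  qed
qed

lemma dim_delete_row [simp]:
  "dim_row (delete_row k A) = dim_row A - 1"
  "dim_col (delete_row k A) = dim_col A"
  by (simp_all add: delete_row_def)

lemma delete_row_mult_vec_index:
  assumes "i < dim_row A - 1"
  shows "(delete_row k A *\<^sub>v v) $ i = (A *\<^sub>v v) $ (if i + 1 < k then i else i + 1)"
proof -
  have "row (delete_row k A) i = row A (if i + 1 < k then i else i + 1)"
    using assms by (intro eq_vecI) (auto simp: delete_row_def)
  then show ?thesis
    using assms by simp
qed

definition shift2_seq :: "'a :: zero vec \<Rightarrow> nat \<Rightarrow> 'a" where
  "shift2_seq v m = (if 2 \<le> m \<and> m < dim_vec v + 2 then v $ (m - 2) else 0)"

lemma sum_shift2_seq_delta:
  fixes v :: "'a :: semiring_0 vec"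
  assumes "v \<in> carrier_vec n"
  shows "(\<Sum>j<n. if j + 2 = c then b * shift2_seq v (j + 2) else 0) = b * shift2_seq v c"
proof (cases "2 \<le> c")
  case True
  have "(\<Sum>j<n. if j + 2 = c then b * shift2_seq v (j + 2) else 0)
      = (\<Sum>j<n. if j = c - 2 then b * shift2_seq v c else 0)"
    using True by (intro sum.cong) auto
  also have "\<dots> = b * shift2_seq v c"
    using True assms by (auto simp: shift2_seq_def)
  finally show ?thesis .
next
  case False
  then show ?thesis by (simp add: shift2_seq_def)
qed

lemma E_mat_mult_vec_index_eq_0_iff:
  assumes v: "v \<in> carrier_vec n" and r: "r \<le> n"
  shows "(E_mat n a *\<^sub>v v) $ r = 0 \<longleftrightarrow> E_recurrence a (shift2_seq v) r"
proof -
  let ?y = "shift2_seq v"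
  have "(E_mat n a *\<^sub>v v) $ r = (\<Sum>j<n. E_entry a (r + 1) (j + 1) * ?y (j + 2))"
    using v r by (simp add: E_mat_def scalar_prod_def lessThan_atLeast0 shift2_seq_def)
  also have "\<dots> = (\<Sum>j<n. (if j + 2 = r then (- 1) * ?y (j + 2) else 0)
      + (if j + 2 = r + 1 then a * ?y (j + 2) else 0)
      + (if j + 2 = r + 2 then (- a) * ?y (j + 2) else 0)
      + (if j + 2 = r + 3 then 1 * ?y (j + 2) else 0))"
    by (intro sum.cong) (auto simp: E_entry_def)
  also have "\<dots> = - ?y r + a * ?y (r + 1) - a * ?y (r + 2) + ?y (r + 3)"
    by (simp only: sum.distrib sum_shift2_seq_delta[OF v])
  finally show ?thesis
    by (simp add: E_recurrence_def)
qed

lemma delete_row_E_mat_kernel: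
  assumes a: "9/2 \<le> a" and k: "1 \<le> k" "k \<le> n + 1"
    and v: "v \<in> carrier_vec n" and kernel: "delete_row k (E_mat n a) *\<^sub>v v = 0\<^sub>v n"
  shows "v = 0\<^sub>v n"
proof -
  have dims: "dim_row (E_mat n a) = n + 1"
    by (simp add: E_mat_def)
  have "(E_mat n a *\<^sub>v v) $ r = 0" if r: "r \<le> n" "r \<noteq> k - 1" for r
  proof -
    define i where "i = (if r < k - 1 then r else r - 1)"
    have i: "i < n" "(if i + 1 < k then i else i + 1) = r"
      using r k by (auto simp: i_def)
    then have "(E_mat n a *\<^sub>v v) $ r = (delete_row k (E_mat n a) *\<^sub>v v) $ i"
      using delete_row_mult_vec_index[of i "E_mat n a" k v] dims by simp
    also have "\<dots> = 0"
      using kernel i by simp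
    finally show ?thesis .
  qed
  then have rec: "E_recurrence a (shift2_seq v) r" if "r \<le> n" "r \<noteq> k - 1" for r
    using E_mat_mult_vec_index_eq_0_iff[OF v] that by blast
  have vanish: "shift2_seq v m = 0" for m
    by (rule E_recurrence_one_defect_vanishes[OF a _ _ _ _ rec])
      (use k v in \<open>auto simp: shift2_seq_def\<close>)
  have "v $ j = 0" if "j < n" for j
    using vanish[of "j + 2"] that v by (simp add: shift2_seq_def)
  then show ?thesis
    using v by (intro eq_vecI) auto
qed

lemma det_nonzero_imp_invertible_mat:
  assumes A: "A \<in> carrier_mat n n" and "det A \<noteq> (0 :: 'a :: field)"
  shows "invertible_mat A"
proof -
  have "A \<in> Units (ring_mat TYPE('a) n ())"
    using det_non_zero_imp_unit[OF assms] .
  then obtain B where B: "B \<in> carrier_mat n n" "B * A = 1\<^sub>m n" "A * B = 1\<^sub>m n"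
    by (auto simp: Units_def ring_mat_def)
  show ?thesis
    unfolding invertible_mat_def inverts_mat_def
    using A B by (intro conjI exI[of _ B]) auto
qed

theorem proposition4p2:
  fixes a :: real and n k :: nat
  assumes "a > 5" and "1 \<le> k" and "k \<le> n + 1"
  shows "invertible_mat (delete_row k (E_mat n a))"
proof -
  let ?M = "delete_row k (E_mat n a)"
  have M: "?M \<in> carrier_mat n n"
    by (intro carrier_matI) (simp_all add: E_mat_def)
  have a: "9/2 \<le> a"
    using assms(1) by simp
  have "det ?M \<noteq> 0"
  proof
    assume "det ?M = 0"
    then obtain v where v: "v \<in> carrier_vec n" "v \<noteq> 0\<^sub>v n" "?M *\<^sub>v v = 0\<^sub>v n"
      using det_0_iff_vec_prod_zero_field[OF M] by auto
    then show False
      using delete_row_E_mat_kernel[OF a assms(2,3) v(1,3)] by simp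
  qed
  then show ?thesis
    by (rule det_nonzero_imp_invertible_mat[OF M])
qed

end
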